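(* Let $n\geq1$. In the monoid $\Sigma_n$ and in the monoid $\mathcal{H}_n^+$, any two elements $x,y$ admit both a common right-multiple and a common left-multiple.
   Context: $\mathcal{H}_n^+$ is the monoid with generators $\rho_1,\dots,\rho_n$ and relations $\rho_1\rho_j\rho_i=\rho_{i+1}\rho_j$ for $1\leq i<j\leq n$. $\Sigma_n$ is the submonoid of the braid group $\mathcal{B}_{n+1}$ (standard Artin generators $\sigma_1,\dots,\sigma_n$) generated by $\sigma_1,\ \sigma_1\sigma_2,\ \dots,\ \sigma_1\sigma_2\cdots\sigma_n$. A common right-multiple of $x,y$ is an element $xa=yb$; a common left-multiple is an element $ax=by$. *)

theory Defs
  imports Main
begin

text \<open>Words over the generators rho_1..rho_n are lists of naturals in {1..n}.\<close>

inductive H_step :: "nat \<Rightarrow> nat list \<Rightarrow> nat list \<Rightarrow> bool" for n where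
  "1 \<le> i \<Longrightarrow> i < j \<Longrightarrow> j \<le> n \<Longrightarrow>
     H_step n (u @ [1, j, i] @ v) (u @ [Suc i, j] @ v)"

inductive H_eq :: "nat \<Rightarrow> nat list \<Rightarrow> nat list \<Rightarrow> bool" for n where
  H_refl: "H_eq n w w"
| H_step_fwd: "H_step n u w \<Longrightarrow> H_eq n u w"
| H_sym: "H_eq n u w \<Longrightarrow> H_eq n w u"
| H_trans: "H_eq n u v \<Longrightarrow> H_eq n v w \<Longrightarrow> H_eq n u w"

text \<open>A letter (i, True) is sigma_i, (i, False) is sigma_i inverse, 1 <= i <= n.\<close>

inductive B_step :: "nat \<Rightarrow> (nat \<times> bool) list \<Rightarrow> (nat \<times> bool) list \<Rightarrow> bool" for n where
  B_comm: "1 \<le> i \<Longrightarrow> i \<le> n \<Longrightarrow> 1 \<le> j \<Longrightarrow> j \<le> n \<Longrightarrow> i + 2 \<le> j \<Longrightarrow>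
     B_step n (u @ [(i, True), (j, True)] @ v) (u @ [(j, True), (i, True)] @ v)"
| B_braid: "1 \<le> i \<Longrightarrow> Suc i \<le> n \<Longrightarrow>
     B_step n (u @ [(i, True), (Suc i, True), (i, True)] @ v)
              (u @ [(Suc i, True), (i, True), (Suc i, True)] @ v)"
| B_cancel: "1 \<le> i \<Longrightarrow> i \<le> n \<Longrightarrow>
     B_step n (u @ [(i, b), (i, \<not> b)] @ v) (u @ v)"

inductive B_eq :: "nat \<Rightarrow> (nat \<times> bool) list \<Rightarrow> (nat \<times> bool) list \<Rightarrow> bool" for n where
  B_refl: "B_eq n w w"
| B_step_fwd: "B_step n u w \<Longrightarrow> B_eq n u w"
| B_sym: "B_eq n u w \<Longrightarrow> B_eq n w u"
| B_trans: "B_eq n u v \<Longrightarrow> B_eq n v w \<Longrightarrow> B_eq n u w"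

text \<open>An element of Sigma_n is a product
  delta_(k_1) ... delta_(k_m) with all k_i in {1..n}; we represent it by the list
  of indices ks, and its braid word is Sigma_word ks.\<close>

definition delta :: "nat \<Rightarrow> (nat \<times> bool) list" where
  "delta k = map (\<lambda>i. (i, True)) [1..<Suc k]"

definition Sigma_word :: "nat list \<Rightarrow> (nat \<times> bool) list" where
  "Sigma_word ks = concat (map delta ks)"

end

theory Submission imports Defs begin

text \<open>Both monoids are quotients of the free monoid on \<open>\<rho>\<^sub>1, \<dots>, \<rho>\<^sub>n\<close> by a congruence in which
  \<open>\<rho>\<^sub>1 \<rho>\<^sub>n \<rho>\<^sub>i = \<rho>\<^sub>i\<^sub>+\<^sub>1 \<rho>\<^sub>n\<close> holds; for \<open>\<Sigma>\<^sub>n\<close> take \<open>\<rho>\<^sub>k \<mapsto> \<delta>\<^sub>k = \<sigma>\<^sub>1\<cdots>\<sigma>\<^sub>k\<close> and use that conjugation by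
  \<open>\<delta>\<^sub>n\<close> shifts \<open>\<sigma>\<^sub>m\<close> to \<open>\<sigma>\<^sub>m\<^sub>+\<^sub>1\<close>. These relations alone give \<open>\<rho>\<^sub>k \<rho>\<^sub>n\<^sup>k \<rho>\<^sub>n\<^sub>-\<^sub>k \<rho>\<^sub>n\<^sup>n\<^sup>-\<^sup>k = \<Delta>\<close>
  with \<open>\<Delta> = \<rho>\<^sub>n\<^sup>n\<^sup>+\<^sup>1\<close>, and \<open>\<Delta>\<close> is central. So every generator divides \<open>\<Delta>\<close> on both sides,
  every word of length \<open>\<ell>\<close> divides \<open>\<Delta>\<^sup>\<ell>\<close> on both sides, and powers of \<open>\<Delta>\<close> are common multiples.\<close>

section \<open>Congruences containing the relations \<open>\<rho>\<^sub>1 \<rho>\<^sub>n \<rho>\<^sub>i = \<rho>\<^sub>i\<^sub>+\<^sub>1 \<rho>\<^sub>n\<close>\<close>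

locale rho_congruence =
  fixes E :: "nat list \<Rightarrow> nat list \<Rightarrow> bool" and n :: nat
  assumes n_pos: "1 \<le> n"
    and refl: "E u u"
    and sym: "E u v \<Longrightarrow> E v u"
    and trans [trans]: "E u v \<Longrightarrow> E v w \<Longrightarrow> E u w"
    and cong: "E u v \<Longrightarrow> E (w @ u @ z) (w @ v @ z)"
    and rho_rel: "1 \<le> i \<Longrightarrow> i < n \<Longrightarrow> E [1, n, i] [Suc i, n]"
begin

lemma cong_left: "E u v \<Longrightarrow> E (w @ u) (w @ v)"
  using cong[of u v w "[]"] by simp

lemma cong_right: "E u v \<Longrightarrow> E (u @ z) (v @ z)"
  using cong[of u v "[]" z] by simp

lemma eq_words: "u = v \<Longrightarrow> E u v"
  using refl by simp

abbreviation rho_n_pow :: "nat \<Rightarrow> nat list" where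
  "rho_n_pow p \<equiv> replicate p n"

lemma rho_n_pow_add: "rho_n_pow p @ rho_n_pow q = rho_n_pow (p + q)"
  by (simp add: replicate_add)

lemma pass_rho_n_pow:
  assumes "1 \<le> p" "1 \<le> k" "k + p \<le> n"
  shows "E ([k + p] @ rho_n_pow p) ([p] @ rho_n_pow p @ [k])"
  using assms
proof (induction p rule: nat_induct_at_least)
  case base
  then show ?case using sym[OF rho_rel[of k]] by simp
next
  case (Suc p)
  have IH: "E ([k + p] @ rho_n_pow p) ([p] @ rho_n_pow p @ [k])"
    using Suc by simp
  have "E ([k + Suc p] @ rho_n_pow (Suc p)) ([Suc (k + p), n] @ rho_n_pow p)"
    by (rule eq_words) simp
  also have "E \<dots> ([1, n, k + p] @ rho_n_pow p)"
    using Suc by (intro sym[OF cong_right] rho_rel) auto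
  also have "E \<dots> ([1, n, p] @ rho_n_pow p @ [k])"
    using cong_left[OF IH, of "[1, n]"] by simp
  also have "E \<dots> ([Suc p, n] @ rho_n_pow p @ [k])"
    using Suc by (intro cong_right rho_rel) auto
  also have "E \<dots> ([Suc p] @ rho_n_pow (Suc p) @ [k])"
    by (rule eq_words) (simp add: replicate_append_same[symmetric])
  finally show ?case .
qed

lemma rho_n_pow_Suc_factor:
  assumes "1 \<le> p" "p < n"
  shows "E (rho_n_pow (Suc p)) ([p] @ rho_n_pow p @ [n - p])"
  using pass_rho_n_pow[of p "n - p"] assms by simp

definition Delta :: "nat list" where
  "Delta = rho_n_pow (Suc n)"

abbreviation Delta_pow :: "nat \<Rightarrow> nat list" where
  "Delta_pow m \<equiv> concat (replicate m Delta)"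

lemma set_Delta_pow: "set (Delta_pow m) \<subseteq> {1..n}"
  using n_pos by (auto simp: Delta_def)

lemma Delta_pow_Suc_right: "Delta_pow (Suc m) = Delta_pow m @ Delta"
  by (simp flip: replicate_append_same)

lemma Delta_pow_commute: "Delta_pow p @ Delta_pow q = Delta_pow q @ Delta_pow p"
  by (simp flip: concat_append replicate_add add: add.commute)

lemma Delta_factorization:
  assumes "1 \<le> k" "k \<le> n"
  obtains c where "set c \<subseteq> {1..n}" "E Delta ([k] @ c)" "E Delta (c @ [k])"
proof (cases "k = n")
  case True
  then show ?thesis
    using n_pos by (intro that[of "rho_n_pow n"]) (auto intro: eq_words simp: Delta_def replicate_append_same)
next
  case False
  define c where "c = rho_n_pow k @ [n - k] @ rho_n_pow (n - k)"
  have split: "Delta = rho_n_pow (Suc k) @ rho_n_pow (n - k)" "Delta = rho_n_pow k @ rho_n_pow (Suc (n - k))"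
    using assms by (simp_all only: Delta_def rho_n_pow_add) simp_all
  have "E Delta ([k] @ c)"
    unfolding split(1) using assms False cong_right[OF rho_n_pow_Suc_factor[of k]] by (simp add: c_def)
  moreover have "E Delta (c @ [k])"
    unfolding split(2) using assms False cong_left[OF rho_n_pow_Suc_factor[of "n - k"]] by (simp add: c_def)
  moreover have "set c \<subseteq> {1..n}"
    using assms False by (auto simp: c_def)
  ultimately show ?thesis
    using that by blast
qed

lemma Delta_central:
  assumes "1 \<le> k" "k \<le> n"
  shows "E ([k] @ Delta) (Delta @ [k])"
proof -
  obtain c where c: "E Delta ([k] @ c)" "E Delta (c @ [k])"
    using Delta_factorization[OF assms] .
  have "E ([k] @ Delta) ([k] @ c @ [k])"
    using cong_left[OF c(2), of "[k]"] by simp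
  also have "E \<dots> (Delta @ [k])"
    using sym[OF cong_right[OF c(1), of "[k]"]] by simp
  finally show ?thesis .
qed

lemma Delta_pow_central:
  assumes "1 \<le> k" "k \<le> n"
  shows "E ([k] @ Delta_pow m) (Delta_pow m @ [k])"
proof (induction m)
  case 0
  then show ?case by (intro eq_words) simp
next
  case (Suc m)
  have "E ([k] @ Delta_pow (Suc m)) (Delta @ ([k] @ Delta_pow m))"
    using cong_right[OF Delta_central[OF assms]] by simp
  also have "E \<dots> (Delta_pow (Suc m) @ [k])"
    using cong_left[OF Suc.IH] by simp
  finally show ?case .
qed

lemma left_divides_Delta_pow:
  "set x \<subseteq> {1..n} \<Longrightarrow> \<exists>a. set a \<subseteq> {1..n} \<and> E (x @ a) (Delta_pow (length x))"
proof (induction x)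
  case Nil
  then show ?case by (intro exI[of _ "[]"]) (auto intro: eq_words)
next
  case (Cons k x)
  then obtain a where a: "set a \<subseteq> {1..n}" "E (x @ a) (Delta_pow (length x))"
    by auto
  have k: "1 \<le> k" "k \<le> n"
    using Cons.prems by auto
  obtain c where c: "set c \<subseteq> {1..n}" "E Delta ([k] @ c)"
    using Delta_factorization[OF k] by blast
  have "E ((k # x) @ a @ c) ([k] @ Delta_pow (length x) @ c)"
    using cong[OF a(2), of "[k]" c] by simp
  also have "E \<dots> (Delta_pow (length x) @ [k] @ c)"
    using cong_right[OF Delta_pow_central[OF k, of "length x"], of c] by simp
  also have "E \<dots> (Delta_pow (length (k # x)))"
    using cong_left[OF sym[OF c(2)]] by (simp only: length_Cons Delta_pow_Suc_right)
  finally show ?case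
    using a c by (intro exI[of _ "a @ c"]) auto
qed

lemma right_divides_Delta_pow:
  "set x \<subseteq> {1..n} \<Longrightarrow> \<exists>a. set a \<subseteq> {1..n} \<and> E (a @ x) (Delta_pow (length x))"
proof (induction x rule: rev_induct)
  case Nil
  then show ?case by (intro exI[of _ "[]"]) (auto intro: eq_words)
next
  case (snoc k x)
  then obtain a where a: "set a \<subseteq> {1..n}" "E (a @ x) (Delta_pow (length x))"
    by auto
  have k: "1 \<le> k" "k \<le> n"
    using snoc.prems by auto
  obtain c where c: "set c \<subseteq> {1..n}" "E Delta (c @ [k])"
    using Delta_factorization[OF k] by blast
  have "E ((c @ a) @ x @ [k]) (c @ Delta_pow (length x) @ [k])"
    using cong[OF a(2), of c "[k]"] by simp
  also have "E \<dots> ((c @ [k]) @ Delta_pow (length x))"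
    using cong_left[OF sym[OF Delta_pow_central[OF k, of "length x"]], of c] by simp
  also have "E \<dots> (Delta_pow (length (x @ [k])))"
    using cong_right[OF sym[OF c(2)]] by simp
  finally show ?case
    using a c by (intro exI[of _ "c @ a"]) auto
qed

lemma common_right_multiple:
  assumes "set x \<subseteq> {1..n}" "set y \<subseteq> {1..n}"
  shows "\<exists>a b. set a \<subseteq> {1..n} \<and> set b \<subseteq> {1..n} \<and> E (x @ a) (y @ b)"
proof -
  obtain a where a: "set a \<subseteq> {1..n}" "E (x @ a) (Delta_pow (length x))"
    using left_divides_Delta_pow assms(1) by blast
  obtain b where b: "set b \<subseteq> {1..n}" "E (y @ b) (Delta_pow (length y))"
    using left_divides_Delta_pow assms(2) by blast
  have "E (x @ a @ Delta_pow (length y)) (Delta_pow (length x) @ Delta_pow (length y))"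
    using cong_right[OF a(2), of "Delta_pow (length y)"] by simp
  also have "E \<dots> (y @ b @ Delta_pow (length x))"
    using sym[OF cong_right[OF b(2), of "Delta_pow (length x)"]] by (simp add: Delta_pow_commute)
  finally show ?thesis
    using a b set_Delta_pow by (intro exI[of _ "a @ Delta_pow (length y)"] exI[of _ "b @ Delta_pow (length x)"]) auto
qed

lemma common_left_multiple:
  assumes "set x \<subseteq> {1..n}" "set y \<subseteq> {1..n}"
  shows "\<exists>a b. set a \<subseteq> {1..n} \<and> set b \<subseteq> {1..n} \<and> E (a @ x) (b @ y)"
proof -
  obtain a where a: "set a \<subseteq> {1..n}" "E (a @ x) (Delta_pow (length x))"
    using right_divides_Delta_pow assms(1) by blast
  obtain b where b: "set b \<subseteq> {1..n}" "E (b @ y) (Delta_pow (length y))"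
    using right_divides_Delta_pow assms(2) by blast
  have "E ((Delta_pow (length y) @ a) @ x) (Delta_pow (length y) @ Delta_pow (length x))"
    using cong_left[OF a(2), of "Delta_pow (length y)"] by simp
  also have "E \<dots> ((Delta_pow (length x) @ b) @ y)"
    using sym[OF cong_left[OF b(2), of "Delta_pow (length x)"]] by (simp add: Delta_pow_commute)
  finally show ?thesis
    using a b set_Delta_pow by (intro exI[of _ "Delta_pow (length y) @ a"] exI[of _ "Delta_pow (length x) @ b"]) auto
qed

end

section \<open>The monoid \<open>\<H>\<^sub>n\<^sup>+\<close>\<close>

lemma H_step_append_context: "H_step n u v \<Longrightarrow> H_step n (w @ u @ z) (w @ v @ z)"
proof (induction rule: H_step.cases)
  case (1 i j u v)
  then show ?case using H_step.intros[of i j n "w @ u" "v @ z"] by simp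
qed

lemma H_eq_append_context: "H_eq n u v \<Longrightarrow> H_eq n (w @ u @ z) (w @ v @ z)"
  by (induction rule: H_eq.induct)
    (blast intro: H_refl H_sym H_trans H_step_fwd H_step_append_context)+

lemma H_rho_congruence: "1 \<le> n \<Longrightarrow> rho_congruence (H_eq n) n"
proof unfold_locales
  show "H_eq n [1, n, i] [Suc i, n]" if "1 \<le> i" "i < n" for i
    using that H_step.intros[of i n n "[]" "[]"] by (simp add: H_step_fwd)
qed (blast intro: H_refl H_sym H_trans H_eq_append_context)+

section \<open>The monoid \<open>\<Sigma>\<^sub>n\<close>\<close>

lemma B_step_append_context: "B_step n u v \<Longrightarrow> B_step n (w @ u @ z) (w @ v @ z)"
proof (induction rule: B_step.cases)
  case (B_comm i j u v)
  then show ?case using B_step.B_comm[of i n j "w @ u" "v @ z"] by simp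
next
  case (B_braid i u v)
  then show ?case using B_step.B_braid[of i n "w @ u" "v @ z"] by simp
next
  case (B_cancel i u b v)
  then show ?case using B_step.B_cancel[of i n "w @ u" b "v @ z"] by simp
qed

lemma B_eq_append_context: "B_eq n u v \<Longrightarrow> B_eq n (w @ u @ z) (w @ v @ z)"
  by (induction rule: B_eq.induct)
    (blast intro: B_refl B_sym B_trans B_step_fwd B_step_append_context)+

definition positive_word :: "nat list \<Rightarrow> (nat \<times> bool) list" where
  "positive_word w = map (\<lambda>i. (i, True)) w"

definition positive_eq :: "nat \<Rightarrow> nat list \<Rightarrow> nat list \<Rightarrow> bool" where
  "positive_eq n u v \<longleftrightarrow> B_eq n (positive_word u) (positive_word v)"

lemma positive_eq_equalI: "u = v \<Longrightarrow> positive_eq n u v"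
  unfolding positive_eq_def by (simp add: B_eq.B_refl)

lemma positive_eq_sym: "positive_eq n u v \<Longrightarrow> positive_eq n v u"
  unfolding positive_eq_def by (rule B_eq.B_sym)

lemma positive_eq_trans [trans]: "positive_eq n u v \<Longrightarrow> positive_eq n v w \<Longrightarrow> positive_eq n u w"
  unfolding positive_eq_def by (rule B_eq.B_trans)

lemma positive_eq_append_context: "positive_eq n u v \<Longrightarrow> positive_eq n (w @ u @ z) (w @ v @ z)"
  unfolding positive_eq_def positive_word_def using B_eq_append_context by fastforce

lemma positive_eq_cong_left: "positive_eq n u v \<Longrightarrow> positive_eq n (w @ u) (w @ v)"
  using positive_eq_append_context[of n u v w "[]"] by simp

lemma positive_eq_cong_right: "positive_eq n u v \<Longrightarrow> positive_eq n (u @ z) (v @ z)"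
  using positive_eq_append_context[of n u v "[]" z] by simp

lemma positive_eq_far_commute: "1 \<le> i \<Longrightarrow> j \<le> n \<Longrightarrow> i + 2 \<le> j \<Longrightarrow> positive_eq n [i, j] [j, i]"
  unfolding positive_eq_def positive_word_def
  using B_step.B_comm[of i n j "[]" "[]"] by (auto intro: B_eq.B_step_fwd)

lemma positive_eq_braid: "1 \<le> m \<Longrightarrow> Suc m \<le> n \<Longrightarrow> positive_eq n [m, Suc m, m] [Suc m, m, Suc m]"
  unfolding positive_eq_def positive_word_def
  using B_step.B_braid[of m n "[]" "[]"] by (auto intro: B_eq.B_step_fwd)

lemma positive_eq_commute_past_right:
  "\<forall>x\<in>set xs. m + 2 \<le> x \<and> x \<le> n \<Longrightarrow> 1 \<le> m \<Longrightarrow> positive_eq n (m # xs) (xs @ [m])"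
proof (induction xs)
  case Nil
  then show ?case by (simp add: positive_eq_equalI)
next
  case (Cons x xs)
  have "positive_eq n ([m, x] @ xs) ([x, m] @ xs)"
    using Cons.prems by (intro positive_eq_cong_right positive_eq_far_commute) auto
  also have "positive_eq n \<dots> ([x] @ (xs @ [m]))"
    using Cons positive_eq_cong_left[of n "m # xs" "xs @ [m]" "[x]"] by simp
  finally show ?case by simp
qed

lemma positive_eq_commute_past_left:
  "\<forall>x\<in>set xs. 1 \<le> x \<and> x + 2 \<le> m \<Longrightarrow> m \<le> n \<Longrightarrow> positive_eq n (xs @ [m]) (m # xs)"
proof (induction xs)
  case Nil
  then show ?case by (simp add: positive_eq_equalI)
next
  case (Cons x xs)
  have "positive_eq n ([x] @ (xs @ [m])) ([x, m] @ xs)"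
    using Cons positive_eq_cong_left[of n "xs @ [m]" "m # xs" "[x]"] by simp
  also have "positive_eq n \<dots> ([m, x] @ xs)"
    using Cons.prems by (intro positive_eq_cong_right positive_eq_far_commute) auto
  finally show ?case by simp
qed

lemma upt_split_pair:
  assumes "1 \<le> m" "m < n"
  shows "[1..<Suc n] = [1..<m] @ [m, Suc m] @ [m + 2..<Suc n]"
proof -
  have "[1..<Suc n] = [1..<m] @ [m..<Suc n]"
    using assms upt_add_eq_append[of 1 m "Suc n - m"] by simp
  moreover have "[m..<Suc n] = m # Suc m # [m + 2..<Suc n]"
    using assms by (simp add: upt_conv_Cons del: upt_Suc)
  ultimately show ?thesis
    by (simp del: upt_Suc)
qed

text \<open>In \<open>\<B>\<^sub>n\<^sub>+\<^sub>1\<close>, \<open>\<delta>\<^sub>n \<sigma>\<^sub>m = \<sigma>\<^sub>m\<^sub>+\<^sub>1 \<delta>\<^sub>n\<close> for \<open>m < n\<close>: move \<open>\<sigma>\<^sub>m\<close> left past \<open>\<sigma>\<^sub>m\<^sub>+\<^sub>2\<cdots>\<sigma>\<^sub>n\<close>,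
  apply the braid relation, then move \<open>\<sigma>\<^sub>m\<^sub>+\<^sub>1\<close> left past \<open>\<sigma>\<^sub>1\<cdots>\<sigma>\<^sub>m\<^sub>-\<^sub>1\<close>.\<close>

lemma delta_n_shifts_generator:
  assumes "1 \<le> m" "m < n"
  shows "positive_eq n ([1..<Suc n] @ [m]) (Suc m # [1..<Suc n])"
proof -
  have "positive_eq n (([1..<m] @ [m, Suc m]) @ ([m + 2..<Suc n] @ [m]))
                      (([1..<m] @ [m, Suc m]) @ (m # [m + 2..<Suc n]))"
    using assms by (intro positive_eq_cong_left positive_eq_sym[OF positive_eq_commute_past_right]) auto
  also have "positive_eq n \<dots> ([1..<m] @ [Suc m, m, Suc m] @ [m + 2..<Suc n])"
    using assms positive_eq_append_context[OF positive_eq_braid[of m n], of "[1..<m]" "[m + 2..<Suc n]"]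
    by simp
  also have "positive_eq n \<dots> ((Suc m # [1..<m]) @ ([m, Suc m] @ [m + 2..<Suc n]))"
    using assms positive_eq_cong_right[OF positive_eq_commute_past_left[of "[1..<m]" "Suc m" n]]
    by simp
  finally show ?thesis
    using upt_split_pair[OF assms] by simp
qed

lemma delta_n_shifts_delta:
  "i < n \<Longrightarrow> positive_eq n ([1..<Suc n] @ [1..<Suc i]) (map Suc [1..<Suc i] @ [1..<Suc n])"
proof (induction i)
  case 0
  then show ?case by (simp add: positive_eq_equalI)
next
  case (Suc i)
  have "positive_eq n (([1..<Suc n] @ [1..<Suc i]) @ [Suc i])
                      ((map Suc [1..<Suc i] @ [1..<Suc n]) @ [Suc i])"
    using Suc by (intro positive_eq_cong_right) auto
  also have "positive_eq n \<dots> (map Suc [1..<Suc i] @ (Suc (Suc i) # [1..<Suc n]))"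
    using Suc positive_eq_cong_left[OF delta_n_shifts_generator[of "Suc i" n], of "map Suc [1..<Suc i]"]
    by simp
  finally show ?case by simp
qed

lemma Sigma_word_eq_positive_word:
  "Sigma_word ks = positive_word (concat (map (\<lambda>k. [1..<Suc k]) ks))"
  unfolding Sigma_word_def positive_word_def delta_def by (induction ks) auto

definition Sigma_eq :: "nat \<Rightarrow> nat list \<Rightarrow> nat list \<Rightarrow> bool" where
  "Sigma_eq n u v \<longleftrightarrow> B_eq n (Sigma_word u) (Sigma_word v)"

lemma Sigma_rho_relation:
  assumes "1 \<le> i" "i < n"
  shows "Sigma_eq n [1, n, i] [Suc i, n]"
proof -
  have "positive_eq n ([1] @ [1..<Suc n] @ [1..<Suc i]) ([1] @ map Suc [1..<Suc i] @ [1..<Suc n])"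
    using assms by (intro positive_eq_cong_left delta_n_shifts_delta)
  moreover have "[1..<Suc (Suc i)] = [1] @ map Suc [1..<Suc i]"
    by (simp add: map_Suc_upt upt_conv_Cons del: upt_Suc)
  moreover have "[1..<Suc 1] = [1]"
    by simp
  ultimately show ?thesis
    unfolding Sigma_eq_def Sigma_word_eq_positive_word positive_eq_def
    by (simp del: upt_Suc)
qed

lemma Sigma_word_append: "Sigma_word (u @ v) = Sigma_word u @ Sigma_word v"
  by (simp add: Sigma_word_def)

lemma Sigma_rho_congruence: "1 \<le> n \<Longrightarrow> rho_congruence (Sigma_eq n) n"
proof unfold_locales
  show "Sigma_eq n u u" for u
    unfolding Sigma_eq_def by (rule B_refl)
  show "Sigma_eq n u v \<Longrightarrow> Sigma_eq n v u" for u v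
    unfolding Sigma_eq_def by (rule B_sym)
  show "Sigma_eq n u v \<Longrightarrow> Sigma_eq n v w \<Longrightarrow> Sigma_eq n u w" for u v w
    unfolding Sigma_eq_def by (rule B_trans)
  show "Sigma_eq n u v \<Longrightarrow> Sigma_eq n (w @ u @ z) (w @ v @ z)" for u v w z
    unfolding Sigma_eq_def Sigma_word_append by (rule B_eq_append_context)
  show "Sigma_eq n [1, n, i] [Suc i, n]" if "1 \<le> i" "i < n" for i
    using that by (rule Sigma_rho_relation)
qed

theorem lemma5p4:
  fixes n :: nat
  assumes "n \<ge> 1"
  shows "(\<forall>x y. set x \<subseteq> {1..n} \<and> set y \<subseteq> {1..n} \<longrightarrow>
            (\<exists>a b. set a \<subseteq> {1..n} \<and> set b \<subseteq> {1..n} \<and>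
                   B_eq n (Sigma_word (x @ a)) (Sigma_word (y @ b))) \<and>
            (\<exists>a b. set a \<subseteq> {1..n} \<and> set b \<subseteq> {1..n} \<and>
                   B_eq n (Sigma_word (a @ x)) (Sigma_word (b @ y))))
       \<and> (\<forall>x y. set x \<subseteq> {1..n} \<and> set y \<subseteq> {1..n} \<longrightarrow>
            (\<exists>a b. set a \<subseteq> {1..n} \<and> set b \<subseteq> {1..n} \<and> H_eq n (x @ a) (y @ b)) \<and>
            (\<exists>a b. set a \<subseteq> {1..n} \<and> set b \<subseteq> {1..n} \<and> H_eq n (a @ x) (b @ y)))"
proof -
  interpret Sigma: rho_congruence "Sigma_eq n" n
    using Sigma_rho_congruence assms by simp
  interpret H: rho_congruence "H_eq n" n
    using H_rho_congruence assms by simp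
  show ?thesis
    unfolding Sigma_eq_def[symmetric]
    by (intro conjI allI impI; elim conjE)
      (rule Sigma.common_right_multiple Sigma.common_left_multiple
        H.common_right_multiple H.common_left_multiple; assumption)+
qed

end
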